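(* Let $p,q$ be relatively prime positive integers and let $P_0,P_1$ be relatively prime positive integers with $\min\{P_0,P_1\}\ge 2pq$. Then there exists a unital injective $*$-homomorphism from $I(p,q)$ into $I(P_0,P_1)$.
   Context: For relatively prime positive integers $p,q$, the dimension drop algebra $I(p,q)$ is $\{f\in C([0,1])\otimes M_{pq}: f(0)\in M_p\otimes 1_q,\ f(1)\in 1_p\otimes M_q\}$ (equivalently, functions on two copies of $[0,2\pi]$ glued at $0$, with these conditions at the two free endpoints). *)

theory Defs
  imports Complex_Main
begin

text \<open>Elements of C([0,1]) \<otimes> M_n are represented as functions
  f :: real \<Rightarrow> nat \<Rightarrow> nat \<Rightarrow> complex, (t, i, j) \<mapsto> (i,j)-entry of f(t),
  normalised to be 0 outside t \<in> [0,1] and outside indices i,j < n.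
  M_{pq} = M_p \<otimes> M_q with index (a,b) (a < p, b < q) encoded as a*q + b.\<close>

type_synonym matfun = "real \<Rightarrow> nat \<Rightarrow> nat \<Rightarrow> complex"

definition in_Mp_tensor_1q :: "nat \<Rightarrow> nat \<Rightarrow> (nat \<Rightarrow> nat \<Rightarrow> complex) \<Rightarrow> bool" where
  "in_Mp_tensor_1q p q M \<longleftrightarrow> (\<exists>A :: nat \<Rightarrow> nat \<Rightarrow> complex. \<forall>i<p*q. \<forall>j<p*q.
      M i j = A (i div q) (j div q) * (if i mod q = j mod q then 1 else 0))"

definition in_1p_tensor_Mq :: "nat \<Rightarrow> nat \<Rightarrow> (nat \<Rightarrow> nat \<Rightarrow> complex) \<Rightarrow> bool" where
  "in_1p_tensor_Mq p q M \<longleftrightarrow> (\<exists>B :: nat \<Rightarrow> nat \<Rightarrow> complex. \<forall>i<p*q. \<forall>j<p*q.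
      M i j = (if i div q = j div q then 1 else 0) * B (i mod q) (j mod q))"

definition dimdrop :: "nat \<Rightarrow> nat \<Rightarrow> matfun set" where
  "dimdrop p q = {f.
      (\<forall>i j. continuous_on {0..1} (\<lambda>t. f t i j)) \<and>
      (\<forall>t i j. (t \<notin> {0..1} \<or> p*q \<le> i \<or> p*q \<le> j) \<longrightarrow> f t i j = 0) \<and>
      in_Mp_tensor_1q p q (f 0) \<and> in_1p_tensor_Mq p q (f 1)}"

definition mf_mult :: "nat \<Rightarrow> matfun \<Rightarrow> matfun \<Rightarrow> matfun" where
  "mf_mult n f g = (\<lambda>t i j. \<Sum>k<n. f t i k * g t k j)"

definition mf_star :: "matfun \<Rightarrow> matfun" where
  "mf_star f = (\<lambda>t i j. cnj (f t j i))"

definition mf_add :: "matfun \<Rightarrow> matfun \<Rightarrow> matfun" where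
  "mf_add f g = (\<lambda>t i j. f t i j + g t i j)"

definition mf_scale :: "complex \<Rightarrow> matfun \<Rightarrow> matfun" where
  "mf_scale c f = (\<lambda>t i j. c * f t i j)"

definition mf_unit :: "nat \<Rightarrow> matfun" where
  "mf_unit n = (\<lambda>t i j. if t \<in> {0..1} \<and> i = j \<and> i < n then 1 else 0)"

definition unital_inj_star_hom :: "nat \<Rightarrow> nat \<Rightarrow> nat \<Rightarrow> nat \<Rightarrow> (matfun \<Rightarrow> matfun) \<Rightarrow> bool" where
  "unital_inj_star_hom p q P0 P1 \<phi> \<longleftrightarrow>
     (\<forall>f\<in>dimdrop p q. \<phi> f \<in> dimdrop P0 P1) \<and>
     (\<forall>f\<in>dimdrop p q. \<forall>g\<in>dimdrop p q. \<phi> (mf_add f g) = mf_add (\<phi> f) (\<phi> g)) \<and>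
     (\<forall>c. \<forall>f\<in>dimdrop p q. \<phi> (mf_scale c f) = mf_scale c (\<phi> f)) \<and>
     (\<forall>f\<in>dimdrop p q. \<forall>g\<in>dimdrop p q.
        \<phi> (mf_mult (p*q) f g) = mf_mult (P0*P1) (\<phi> f) (\<phi> g)) \<and>
     (\<forall>f\<in>dimdrop p q. \<phi> (mf_star f) = mf_star (\<phi> f)) \<and>
     \<phi> (mf_unit (p*q)) = mf_unit (P0*P1) \<and>
     inj_on \<phi> (dimdrop p q)"

end

theory Submission
  imports Defs "HOL-Number_Theory.Cong"
begin

text \<open>Since \<open>p, q\<close> are coprime and \<open>P0, P1 \<ge> 2pq\<close>, one can write \<open>P0 = k0 p + l0 q\<close> and
  \<open>P1 = k1 p + l1 q\<close> with \<open>k1 < q < k0\<close> and \<open>l0 < p < l1\<close>. Write \<open>f 0 = a \<otimes> 1\<^sub>q\<close> and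
  \<open>f 1 = 1\<^sub>p \<otimes> b\<close>. Sending \<open>f\<close> to a block diagonal function in \<open>C([0,1]) \<otimes> M\<^sub>P\<^sub>0 \<otimes> M\<^sub>P\<^sub>1\<close>
  whose blocks are copies of \<open>f t\<close>, of \<open>a\<close> and of \<open>b\<close>, arranged suitably, gives a matrix of the form
  \<open>A \<otimes> 1\<close> at \<open>t = 0\<close> (with \<open>A = diag (a\<^sup>k\<^sup>0, b\<^sup>l\<^sup>0)\<close>) and one which a permutation \<open>\<sigma>\<close> of order two
  conjugates into \<open>1 \<otimes> B\<close> at \<open>t = 1\<close> (with \<open>B = diag (a\<^sup>k\<^sup>1, b\<^sup>l\<^sup>1)\<close>). Conjugating by a unitary
  path from \<open>1\<close> to the permutation matrix of \<open>\<sigma>\<close> (times \<open>\<i>\<close>) yields the embedding; it is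
  injective because one block carries \<open>f t\<close> itself.\<close>

section \<open>Conjugation by a unitary path\<close>

definition mat_mult :: "nat \<Rightarrow> (nat \<Rightarrow> nat \<Rightarrow> complex) \<Rightarrow> (nat \<Rightarrow> nat \<Rightarrow> complex) \<Rightarrow> nat \<Rightarrow> nat \<Rightarrow> complex"
  where "mat_mult n A B = (\<lambda>i j. \<Sum>k<n. A i k * B k j)"

definition adj :: "(nat \<Rightarrow> nat \<Rightarrow> complex) \<Rightarrow> nat \<Rightarrow> nat \<Rightarrow> complex"
  where "adj M = (\<lambda>i j. cnj (M j i))"

lemma mat_mult_assoc: "mat_mult n (mat_mult n A B) C = mat_mult n A (mat_mult n B C)"
proof (intro ext)
  fix i j
  have "mat_mult n (mat_mult n A B) C i j = (\<Sum>l<n. \<Sum>k<n. A i k * B k l * C l j)"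
    by (simp add: mat_mult_def sum_distrib_right)
  also have "\<dots> = (\<Sum>k<n. \<Sum>l<n. A i k * B k l * C l j)"
    by (rule sum.swap)
  also have "\<dots> = mat_mult n A (mat_mult n B C) i j"
    by (simp add: mat_mult_def sum_distrib_left mult.assoc)
  finally show "mat_mult n (mat_mult n A B) C i j = mat_mult n A (mat_mult n B C) i j" .
qed

lemma mat_mult_cong:
  assumes "\<And>i j. i < n \<Longrightarrow> j < n \<Longrightarrow> A i j = A' i j" and "\<And>i j. i < n \<Longrightarrow> j < n \<Longrightarrow> B i j = B' i j"
    and "i < n" and "j < n"
  shows "mat_mult n A B i j = mat_mult n A' B' i j"
  unfolding mat_mult_def using assms by (intro sum.cong) auto

lemma mat_mult_id_left:
  assumes "\<And>i j. i < n \<Longrightarrow> j < n \<Longrightarrow> E i j = (if i = j then 1 else 0)" and "i < n"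
  shows "mat_mult n E A i j = A i j"
proof -
  have "mat_mult n E A i j = (\<Sum>k<n. if i = k then A k j else 0)"
    unfolding mat_mult_def using assms by (intro sum.cong) auto
  then show ?thesis using assms by simp
qed

lemma mat_mult_id_right:
  assumes "\<And>i j. i < n \<Longrightarrow> j < n \<Longrightarrow> E i j = (if i = j then 1 else 0)" and "j < n"
  shows "mat_mult n A E i j = A i j"
proof -
  have "mat_mult n A E i j = (\<Sum>k<n. if k = j then A i k else 0)"
    unfolding mat_mult_def using assms by (intro sum.cong) auto
  then show ?thesis using assms by simp
qed

lemma mat_mult_id_inner:
  assumes "\<And>i j. i < n \<Longrightarrow> j < n \<Longrightarrow> E i j = (if i = j then 1 else 0)"
  shows "mat_mult n A (mat_mult n E B) = mat_mult n A B"
  unfolding mat_mult_def[of n A] by (intro ext sum.cong refl) (simp add: mat_mult_id_left[OF assms])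

lemma mat_mult_add_left: "mat_mult n (\<lambda>i j. A i j + B i j) C = (\<lambda>i j. mat_mult n A C i j + mat_mult n B C i j)"
  unfolding mat_mult_def by (simp add: distrib_right sum.distrib)

lemma mat_mult_add_right: "mat_mult n A (\<lambda>i j. B i j + C i j) = (\<lambda>i j. mat_mult n A B i j + mat_mult n A C i j)"
  unfolding mat_mult_def by (simp add: distrib_left sum.distrib)

lemma mat_mult_scale_left: "mat_mult n (\<lambda>i j. c * A i j) B = (\<lambda>i j. c * mat_mult n A B i j)"
  unfolding mat_mult_def by (simp add: sum_distrib_left mult.assoc)

lemma mat_mult_scale_right: "mat_mult n A (\<lambda>i j. c * B i j) = (\<lambda>i j. c * mat_mult n A B i j)"
  unfolding mat_mult_def by (simp add: sum_distrib_left mult.left_commute)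

lemma adj_mat_mult: "adj (mat_mult n A B) = mat_mult n (adj B) (adj A)"
  unfolding adj_def mat_mult_def by (auto intro!: ext simp: mult.commute)

lemma adj_adj [simp]: "adj (adj M) = M"
  by (simp add: adj_def)

definition involution_on :: "nat \<Rightarrow> (nat \<Rightarrow> nat) \<Rightarrow> bool"
  where "involution_on n s \<longleftrightarrow> (\<forall>i<n. s i < n \<and> s (s i) = i)"

text \<open>The unitary path \<open>cos (\<pi>t/2) 1 + \<i> sin (\<pi>t/2) S\<close> from the identity to \<open>\<i>\<close> times the permutation
  matrix \<open>S\<close> of an involution; it is a one-parameter group because \<open>S\<^sup>2 = 1\<close>.\<close>
definition rot :: "(nat \<Rightarrow> nat) \<Rightarrow> real \<Rightarrow> nat \<Rightarrow> nat \<Rightarrow> complex" where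
  "rot s t i k = cos (pi * t / 2) * (if k = i then 1 else 0) + \<i> * sin (pi * t / 2) * (if k = s i then 1 else 0)"

lemma rot_0: "rot s 0 i k = (if i = k then 1 else 0)"
  by (simp add: rot_def)

lemma rot_1: "rot s 1 i k = (if k = s i then \<i> else 0)"
  by (simp add: rot_def)

lemma rot_mult:
  assumes "involution_on n s" and "i < n"
  shows "mat_mult n (rot s t) (rot s u) i j = rot s (t + u) i j"
proof -
  define a b c d where "a = complex_of_real (cos (pi * t / 2))" and "b = complex_of_real (sin (pi * t / 2))"
    and "c = complex_of_real (cos (pi * u / 2))" and "d = complex_of_real (sin (pi * u / 2))"
  have si: "s i < n" "s (s i) = i" using assms by (auto simp: involution_on_def)
  have "mat_mult n (rot s t) (rot s u) i j
      = (\<Sum>k<n. (if k = i then a * rot s u k j else 0) + (if k = s i then \<i> * b * rot s u k j else 0))"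
    unfolding mat_mult_def by (intro sum.cong) (simp_all add: rot_def[of s t] a_def b_def distrib_right)
  also have "\<dots> = a * rot s u i j + \<i> * b * rot s u (s i) j"
    using assms si by (simp add: sum.distrib)
  also have "\<dots> = (a * c - b * d) * (if j = i then 1 else 0) + \<i> * (a * d + b * c) * (if j = s i then 1 else 0)"
    using si by (simp add: rot_def c_def d_def algebra_simps)
  also have "\<dots> = rot s (t + u) i j"
    by (simp add: rot_def a_def b_def c_def d_def distrib_left add_divide_distrib cos_add sin_add)
  finally show ?thesis .
qed

lemma adj_rot:
  assumes "involution_on n s" and "i < n" and "j < n"
  shows "adj (rot s t) i j = rot s (- t) i j"
proof -
  have "(i = s j) = (j = s i)" using assms unfolding involution_on_def by metis
  then show ?thesis by (auto simp: adj_def rot_def)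
qed

lemma rot_unitary:
  assumes "involution_on n s" and "i < n" and "j < n"
  shows "mat_mult n (rot s t) (adj (rot s t)) i j = (if i = j then 1 else 0)"
    and "mat_mult n (adj (rot s t)) (rot s t) i j = (if i = j then 1 else 0)"
proof -
  have "mat_mult n (rot s t) (adj (rot s t)) i j = mat_mult n (rot s t) (rot s (- t)) i j"
    using assms by (intro mat_mult_cong) (auto simp: adj_rot)
  then show "mat_mult n (rot s t) (adj (rot s t)) i j = (if i = j then 1 else 0)"
    using rot_mult[OF assms(1,2)] by (simp add: rot_0)
  have "mat_mult n (adj (rot s t)) (rot s t) i j = mat_mult n (rot s (- t)) (rot s t) i j"
    using assms by (intro mat_mult_cong) (auto simp: adj_rot)
  then show "mat_mult n (adj (rot s t)) (rot s t) i j = (if i = j then 1 else 0)"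
    using rot_mult[OF assms(1,2)] by (simp add: rot_0)
qed

definition rot_conj :: "nat \<Rightarrow> (nat \<Rightarrow> nat) \<Rightarrow> real \<Rightarrow> (nat \<Rightarrow> nat \<Rightarrow> complex) \<Rightarrow> nat \<Rightarrow> nat \<Rightarrow> complex"
  where "rot_conj n s t M = mat_mult n (mat_mult n (rot s t) M) (adj (rot s t))"

lemma rot_conj_cong:
  assumes "\<And>a b. a < n \<Longrightarrow> b < n \<Longrightarrow> M a b = M' a b" and "i < n" and "j < n"
  shows "rot_conj n s t M i j = rot_conj n s t M' i j"
  unfolding rot_conj_def using assms by (intro mat_mult_cong mat_mult_cong refl) auto

lemma rot_conj_mult:
  assumes "involution_on n s"
  shows "rot_conj n s t (mat_mult n A B) = mat_mult n (rot_conj n s t A) (rot_conj n s t B)"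
proof -
  let ?U = "rot s t"
  have "mat_mult n (rot_conj n s t A) (rot_conj n s t B)
      = mat_mult n ?U (mat_mult n A (mat_mult n (mat_mult n (adj ?U) ?U) (mat_mult n B (adj ?U))))"
    unfolding rot_conj_def by (simp only: mat_mult_assoc)
  also have "\<dots> = mat_mult n ?U (mat_mult n A (mat_mult n B (adj ?U)))"
    by (simp only: mat_mult_id_inner[OF rot_unitary(2)[OF assms]])
  finally show ?thesis unfolding rot_conj_def by (simp only: mat_mult_assoc)
qed

lemma rot_conj_adj: "rot_conj n s t (adj M) = adj (rot_conj n s t M)"
  unfolding rot_conj_def adj_mat_mult by (simp add: mat_mult_assoc)

lemma rot_conj_add: "rot_conj n s t (\<lambda>i j. A i j + B i j) i j = rot_conj n s t A i j + rot_conj n s t B i j"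
  unfolding rot_conj_def mat_mult_add_left mat_mult_add_right ..

lemma rot_conj_scale: "rot_conj n s t (\<lambda>i j. c * A i j) i j = c * rot_conj n s t A i j"
  unfolding rot_conj_def mat_mult_scale_left mat_mult_scale_right ..

lemma rot_conj_id:
  assumes "involution_on n s" and "i < n" and "j < n"
    and "\<And>i j. i < n \<Longrightarrow> j < n \<Longrightarrow> E i j = (if i = j then 1 else 0)"
  shows "rot_conj n s t E i j = (if i = j then 1 else 0)"
proof -
  have "rot_conj n s t E i j = mat_mult n (rot s t) (adj (rot s t)) i j"
    unfolding rot_conj_def using assms(2,3) by (intro mat_mult_cong refl) (simp add: mat_mult_id_right assms(4))
  then show ?thesis using rot_unitary(1)[OF assms(1-3)] by simp
qed

lemma rot_conj_inverse:
  assumes "involution_on n s" and "i < n" and "j < n"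
  shows "mat_mult n (mat_mult n (adj (rot s t)) (rot_conj n s t M)) (rot s t) i j = M i j"
proof -
  let ?U = "rot s t"
  have "mat_mult n (mat_mult n (adj ?U) (rot_conj n s t M)) ?U i j
      = mat_mult n (mat_mult n (adj ?U) ?U) (mat_mult n M (mat_mult n (adj ?U) ?U)) i j"
    unfolding rot_conj_def by (simp only: mat_mult_assoc)
  also have "\<dots> = mat_mult n M (mat_mult n (adj ?U) ?U) i j"
    using rot_unitary(2)[OF assms(1)] assms(2) by (rule mat_mult_id_left)
  also have "\<dots> = M i j"
    using rot_unitary(2)[OF assms(1)] assms(3) by (rule mat_mult_id_right)
  finally show ?thesis .
qed

lemma rot_conj_0:
  assumes "i < n" and "j < n"
  shows "rot_conj n s 0 M i j = M i j"
proof -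
  have "rot_conj n s 0 M i j = mat_mult n M (adj (rot s 0)) i j"
    unfolding rot_conj_def using assms by (intro mat_mult_cong refl) (simp_all add: mat_mult_id_left rot_0)
  also have "\<dots> = M i j"
    using assms by (intro mat_mult_id_right) (simp_all add: adj_def rot_0)
  finally show ?thesis .
qed

lemma rot_conj_1:
  assumes "involution_on n s" and "i < n" and "j < n"
  shows "rot_conj n s 1 M i j = M (s i) (s j)"
proof -
  have s: "s i < n" "s j < n" using assms by (auto simp: involution_on_def)
  have row: "mat_mult n (rot s 1) M i l = \<i> * M (s i) l" for l
  proof -
    have "mat_mult n (rot s 1) M i l = (\<Sum>k<n. if k = s i then \<i> * M k l else 0)"
      unfolding mat_mult_def rot_1 by (intro sum.cong) auto
    then show ?thesis using s by simp
  qed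
  have "rot_conj n s 1 M i j = (\<Sum>l<n. if l = s j then \<i> * M (s i) l * - \<i> else 0)"
    unfolding rot_conj_def mat_mult_def[of n "mat_mult n (rot s 1) M"] row
    by (intro sum.cong) (auto simp: adj_def rot_1)
  also have "\<dots> = M (s i) (s j)"
    using s by (simp add: algebra_simps)
  finally show ?thesis .
qed

lemma continuous_on_rot_conj:
  assumes "\<And>i j. continuous_on S (\<lambda>t. M t i j)"
  shows "continuous_on S (\<lambda>t. rot_conj n s t (M t) i j)"
  unfolding rot_conj_def mat_mult_def adj_def rot_def
  by (intro continuous_intros assms) simp_all

section \<open>Block diagonal matrices\<close>

definition block_diag :: "('i \<Rightarrow> 'b) \<Rightarrow> ('i \<Rightarrow> nat) \<Rightarrow> ('b \<Rightarrow> nat \<Rightarrow> nat \<Rightarrow> complex) \<Rightarrow> 'i \<Rightarrow> 'i \<Rightarrow> complex"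
  where "block_diag blk pos F i j = (if blk i = blk j then F (blk i) (pos i) (pos j) else 0)"

locale block_partition =
  fixes n :: nat and blk :: "nat \<Rightarrow> 'b" and pos :: "nat \<Rightarrow> nat" and bsize :: "'b \<Rightarrow> nat"
  assumes bij_betw_pos: "i < n \<Longrightarrow> bij_betw pos {k. k < n \<and> blk k = blk i} {..<bsize (blk i)}"
begin

lemma pos_less_bsize: "i < n \<Longrightarrow> pos i < bsize (blk i)"
  using bij_betwE[OF bij_betw_pos] by blast

lemma pos_eq_iff: "i < n \<Longrightarrow> j < n \<Longrightarrow> blk i = blk j \<Longrightarrow> pos i = pos j \<longleftrightarrow> i = j"
  using bij_betw_imp_inj_on[OF bij_betw_pos, of i] unfolding inj_on_def by auto

lemma block_diag_mult:
  assumes mult: "\<And>r u v. u < bsize r \<Longrightarrow> v < bsize r \<Longrightarrow> H r u v = (\<Sum>w<bsize r. F r u w * G r w v)"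
    and "i < n" and "j < n"
  shows "block_diag blk pos H i j = mat_mult n (block_diag blk pos F) (block_diag blk pos G) i j"
proof (cases "blk i = blk j")
  case True
  define S where "S = {k. k < n \<and> blk k = blk i}"
  have "mat_mult n (block_diag blk pos F) (block_diag blk pos G) i j
      = (\<Sum>k<n. if blk k = blk i then F (blk i) (pos i) (pos k) * G (blk i) (pos k) (pos j) else 0)"
    unfolding mat_mult_def block_diag_def using True by (intro sum.cong) auto
  also have "\<dots> = (\<Sum>k\<in>S. F (blk i) (pos i) (pos k) * G (blk i) (pos k) (pos j))"
    unfolding S_def by (simp add: sum.inter_filter[symmetric] lessThan_def)
  also have "\<dots> = (\<Sum>w<bsize (blk i). F (blk i) (pos i) w * G (blk i) w (pos j))"
    using bij_betw_pos[OF \<open>i < n\<close>] unfolding S_def by (rule sum.reindex_bij_betw)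
  also have "\<dots> = block_diag blk pos H i j"
    using True assms pos_less_bsize by (metis block_diag_def)
  finally show ?thesis ..
next
  case False
  then have "mat_mult n (block_diag blk pos F) (block_diag blk pos G) i j = 0"
    unfolding mat_mult_def block_diag_def by (intro sum.neutral) auto
  then show ?thesis using False by (simp add: block_diag_def)
qed

lemma block_diag_id:
  assumes "\<And>r u v. u < bsize r \<Longrightarrow> v < bsize r \<Longrightarrow> F r u v = (if u = v then 1 else 0)"
    and "i < n" and "j < n"
  shows "block_diag blk pos F i j = (if i = j then 1 else 0)"
proof -
  have "pos i < bsize (blk i)" "pos j < bsize (blk j)"
    using assms pos_less_bsize by auto
  then show ?thesis
    using assms pos_eq_iff by (auto simp: block_diag_def)
qed

end

lemma mult_add_less:
  fixes a b c m :: nat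
  assumes "a < c" and "b < m"
  shows "a * m + b < c * m"
proof -
  have "a * m + b < (a + 1) * m" using assms(2) by simp
  also have "\<dots> \<le> c * m" using assms(1) by (intro mult_right_mono) auto
  finally show ?thesis .
qed

lemma mult_add_eq_iff:
  fixes a a' b b' m :: nat
  assumes "b < m" and "b' < m"
  shows "a * m + b = a' * m + b' \<longleftrightarrow> a = a' \<and> b = b'"
proof
  assume e: "a * m + b = a' * m + b'"
  have "a = a'" using arg_cong[OF e, of "\<lambda>n. n div m"] assms by simp
  then show "a = a' \<and> b = b'" using e by simp
qed simp

lemma div_mod_eq_iff: "(n::nat) = n' \<longleftrightarrow> n div m = n' div m \<and> n mod m = n' mod m"
  by (metis div_mult_mod_eq)

lemma shifted_div_mod_eq_iff:
  "s \<le> n \<Longrightarrow> s \<le> n' \<Longrightarrow> (n::nat) = n' \<longleftrightarrow> (n - s) div m = (n' - s) div m \<and> (n - s) mod m = (n' - s) mod m"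
  by (metis div_mod_eq_iff le_add_diff_inverse)

lemma sum_multiples:
  fixes h :: "nat \<Rightarrow> 'a::comm_monoid_add"
  assumes "0 < q" and "\<And>k. k < p * q \<Longrightarrow> k mod q \<noteq> 0 \<Longrightarrow> h k = 0"
  shows "(\<Sum>k<p * q. h k) = (\<Sum>w<p. h (w * q))"
proof -
  have "inj_on (\<lambda>w. w * q) {..<p}" using assms(1) by (auto simp: inj_on_def)
  then have "(\<Sum>w<p. h (w * q)) = (\<Sum>k\<in>(\<lambda>w. w * q) ` {..<p}. h k)"
    by (simp add: sum.reindex)
  also have "\<dots> = (\<Sum>k<p * q. h k)"
  proof (rule sum.mono_neutral_left)
    show "(\<lambda>w. w * q) ` {..<p} \<subseteq> {..<p * q}" using assms(1) by auto
    show "\<forall>k\<in>{..<p * q} - (\<lambda>w. w * q) ` {..<p}. h k = 0"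
    proof
      fix k assume k: "k \<in> {..<p * q} - (\<lambda>w. w * q) ` {..<p}"
      have "k div q < p" using k by (simp add: less_mult_imp_div_less)
      then have "k mod q \<noteq> 0" using k by (metis DiffD2 add_0_right div_mult_mod_eq image_eqI lessThan_iff)
      then show "h k = 0" using k assms(2) by auto
    qed
  qed simp
  finally show ?thesis ..
qed

lemma coprime_sum_decomposition:
  fixes p q P :: nat
  assumes "0 < p" and "0 < q" and "coprime p q" and "2 * p * q \<le> P"
  shows "\<exists>x y. P = x * p + y * q \<and> x < q \<and> p < y"
proof -
  obtain v where v: "[p * v = 1] (mod q)"
    using cong_solve_coprime_nat[OF assms(3)] by auto
  define x where "x = v * P mod q"
  have "x < q" using assms(2) by (simp add: x_def)
  have "[x * p = v * P * p] (mod q)"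
    unfolding x_def by (intro cong_scalar_right) (simp add: cong_def)
  moreover have "[p * v * P = 1 * P] (mod q)"
    using v by (rule cong_scalar_right)
  ultimately have "[x * p = P] (mod q)"
    by (simp add: cong_def mult.commute mult.left_commute)
  moreover have "x * p < P - p * q"
  proof -
    have "x * p < p * q" using \<open>x < q\<close> assms(1) by (simp add: mult.commute)
    then show ?thesis using assms(4) unfolding mult.assoc by linarith
  qed
  ultimately have "q dvd P - x * p"
    using mod_eq_dvd_iff_nat[of "x * p" P q] unfolding cong_def by simp
  then obtain y where y: "P - x * p = q * y" ..
  have "P = x * p + y * q"
    using y \<open>x * p < P - p * q\<close> by (simp add: mult.commute)
  moreover have "p * q < q * y"
    using y \<open>x * p < P - p * q\<close> by linarith
  then have "p < y" by (simp add: mult.commute[of p q])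
  ultimately show ?thesis using \<open>x < q\<close> by auto
qed

lemma dimdrop_0_eq:
  assumes "f \<in> dimdrop p q" and "a < p" and "a' < p" and "b < q" and "b' < q"
  shows "f 0 (a * q + b) (a' * q + b') = f 0 (a * q) (a' * q) * (if b = b' then 1 else 0)"
proof -
  obtain A where A: "\<forall>i<p * q. \<forall>j<p * q. f 0 i j = A (i div q) (j div q) * (if i mod q = j mod q then 1 else 0)"
    using assms(1) unfolding dimdrop_def in_Mp_tensor_1q_def by auto
  have "a * q + b < p * q" "a' * q + b' < p * q" "a * q < p * q" "a' * q < p * q"
    using mult_add_less assms(2-5) by (auto simp: mult.commute)
  then show ?thesis using A assms(4,5) by simp
qed

lemma dimdrop_1_eq:
  assumes "f \<in> dimdrop p q" and "a < p" and "a' < p" and "b < q" and "b' < q"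
  shows "f 1 (a * q + b) (a' * q + b') = (if a = a' then 1 else 0) * f 1 b b'"
proof -
  obtain B where B: "\<forall>i<p * q. \<forall>j<p * q. f 1 i j = (if i div q = j div q then 1 else 0) * B (i mod q) (j mod q)"
    using assms(1) unfolding dimdrop_def in_1p_tensor_Mq_def by auto
  have "a * q + b < p * q" "a' * q + b' < p * q" "b < p * q" "b' < p * q"
    using mult_add_less[of a p b q] mult_add_less[of a' p b' q] mult_add_less[of 0 p b q] mult_add_less[of 0 p b' q] assms(2-5)
    by (auto simp: mult.commute)
  then show ?thesis using B assms(4,5) by simp
qed

section \<open>The embedding\<close>

datatype block = Full nat nat | At0 nat nat | At1 nat nat

locale dimdrop_split =
  fixes p q P0 P1 k0 l0 k1 l1 :: nat
  assumes p_pos: "0 < p" and q_pos: "0 < q"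
    and P0_eq: "P0 = k0 * p + l0 * q" and P1_eq: "P1 = k1 * p + l1 * q"
    and k1_less_k0: "k1 < k0" and l0_less_l1: "l0 < l1"
begin

abbreviation "s0 \<equiv> k0 * p"
abbreviation "s1 \<equiv> k1 * p"
abbreviation "N \<equiv> P0 * P1"

definition swapped :: "nat \<Rightarrow> nat \<Rightarrow> bool"
  where "swapped c e \<longleftrightarrow> c < k1 \<and> e < l0"

definition full_at :: "nat \<Rightarrow> nat \<Rightarrow> bool"
  where "full_at c y \<longleftrightarrow> s1 \<le> y \<and> \<not> swapped c ((y - s1) div q)"

text \<open>The index \<open>x * P1 + y\<close> of \<open>M\<^sub>P\<^sub>0 \<otimes> M\<^sub>P\<^sub>1\<close> is the pair \<open>(x, y)\<close>. The first coordinate range is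
  cut into \<open>k0\<close> intervals of length \<open>p\<close> followed by \<open>l0\<close> of length \<open>q\<close>, the second into \<open>k1\<close> of
  length \<open>p\<close> followed by \<open>l1\<close> of length \<open>q\<close>. \<open>Full c e\<close> is the \<open>p \<times> q\<close> rectangle formed by the
  \<open>c\<close>-th \<open>p\<close>-interval and the \<open>e\<close>-th \<open>q\<close>-interval, unless it is \<open>swapped\<close>; the remaining pairs in a
  \<open>p\<close>-interval form the blocks \<open>At0 c y\<close> and those in the \<open>e\<close>-th \<open>q\<close>-interval the blocks \<open>At1 e y\<close>.\<close>
definition block_of :: "nat \<Rightarrow> nat \<Rightarrow> block" where
  "block_of x y =
    (if x < s0 then (if full_at (x div p) y then Full (x div p) ((y - s1) div q) else At0 (x div p) y)
     else At1 ((x - s0) div q) y)"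

definition offset_of :: "nat \<Rightarrow> nat \<Rightarrow> nat" where
  "offset_of x y =
    (if x < s0 then (if full_at (x div p) y then x mod p * q + (y - s1) mod q else x mod p)
     else (x - s0) mod q)"

definition blk :: "nat \<Rightarrow> block"
  where "blk i = block_of (i div P1) (i mod P1)"

definition pos :: "nat \<Rightarrow> nat"
  where "pos i = offset_of (i div P1) (i mod P1)"

definition bsize :: "block \<Rightarrow> nat"
  where "bsize r = (case r of Full _ _ \<Rightarrow> p * q | At0 _ _ \<Rightarrow> p | At1 _ _ \<Rightarrow> q)"

definition valid_block :: "block \<Rightarrow> bool" where
  "valid_block r = (case r of
      Full c e \<Rightarrow> c < k0 \<and> e < l1 \<and> \<not> swapped c e
    | At0 c y \<Rightarrow> c < k0 \<and> y < P1 \<and> \<not> full_at c y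
    | At1 e y \<Rightarrow> e < l0 \<and> y < P1)"

definition block_index :: "block \<Rightarrow> nat \<Rightarrow> nat" where
  "block_index r u = (case r of
      Full c e \<Rightarrow> (c * p + u div q) * P1 + (s1 + e * q + u mod q)
    | At0 c y \<Rightarrow> (c * p + u) * P1 + y
    | At1 e y \<Rightarrow> (s0 + e * q + u) * P1 + y)"

lemma P1_pos: "0 < P1"
  using l0_less_l1 q_pos by (simp add: P1_eq)

lemma index_split: "k < N \<Longrightarrow> k div P1 < P0 \<and> k mod P1 < P1"
  using P1_pos by (simp add: less_mult_imp_div_less)

lemma pair_index_less: "x < P0 \<Longrightarrow> y < P1 \<Longrightarrow> x * P1 + y < N"
  using mult_add_less[of x P0 y P1] by (simp add: mult.commute)

lemma valid_block_of:
  assumes "x < P0" and "y < P1"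
  shows "valid_block (block_of x y)"
proof (cases "x < s0")
  case True
  have "x div p < k0" using True p_pos by (simp add: less_mult_imp_div_less)
  moreover have "(y - s1) div q < l1" if "s1 \<le> y"
    using that assms(2) q_pos by (simp add: P1_eq less_mult_imp_div_less)
  ultimately show ?thesis
    using True assms(2) by (auto simp: block_of_def valid_block_def full_at_def)
next
  case False
  then have "(x - s0) div q < l0" using assms(1) q_pos by (simp add: P0_eq less_mult_imp_div_less)
  then show ?thesis using False assms(2) by (simp add: block_of_def valid_block_def)
qed

lemma valid_block_blk: "i < N \<Longrightarrow> valid_block (blk i)"
  using index_split valid_block_of by (simp add: blk_def)

lemma pos_less: "i < N \<Longrightarrow> pos i < bsize (blk i)"
  using p_pos q_pos mult_add_less[of "i div P1 mod p" p "(i mod P1 - s1) mod q" q]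
  by (auto simp: pos_def blk_def block_of_def offset_of_def bsize_def mult.commute)

lemma block_index_block_of: "block_index (block_of x y) (offset_of x y) = x * P1 + y"
  using p_pos q_pos by (auto simp: block_index_def block_of_def offset_of_def full_at_def)

lemma block_index_pos: "i < N \<Longrightarrow> block_index (blk i) (pos i) = i"
  using block_index_block_of by (simp add: blk_def pos_def)

lemma block_index_valid:
  assumes "valid_block r" and "u < bsize r"
  shows "block_index r u < N \<and> blk (block_index r u) = r \<and> pos (block_index r u) = u"
proof (cases r)
  case (Full c e)
  have ce: "c < k0" "e < l1" "\<not> swapped c e" using assms(1) Full by (simp_all add: valid_block_def)
  have u: "u div q < p" "u mod q < q" using assms(2) q_pos Full by (auto simp: bsize_def less_mult_imp_div_less)
  have x: "c * p + u div q < s0" using mult_add_less[OF ce(1) u(1)] .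
  have y: "s1 + e * q + u mod q < P1" using mult_add_less[OF ce(2) u(2)] P1_eq by linarith
  have "full_at c (s1 + e * q + u mod q)"
    using ce u by (simp add: full_at_def add.assoc)
  then show ?thesis
    using Full x y u pair_index_less[of "c * p + u div q"]
    by (auto simp: P0_eq blk_def pos_def block_index_def block_of_def offset_of_def)
next
  case (At0 c y)
  have x: "c * p + u < s0" using mult_add_less[of c k0 u p] assms At0 by (simp add: valid_block_def bsize_def)
  then show ?thesis
    using At0 assms pair_index_less[of "c * p + u" y]
    by (auto simp: P0_eq blk_def pos_def block_index_def block_of_def offset_of_def valid_block_def bsize_def)
next
  case (At1 e y)
  have x: "s0 + e * q + u < P0"
    using mult_add_less[of e l0 u q] assms At1 by (simp add: valid_block_def bsize_def P0_eq)
  then show ?thesis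
    using At1 assms pair_index_less[of "s0 + e * q + u" y]
    by (auto simp: blk_def pos_def block_index_def block_of_def offset_of_def valid_block_def bsize_def)
qed

sublocale block_partition N blk pos bsize
proof
  fix i assume i: "i < N"
  have "block_index (blk i) (pos k) = k" "pos k < bsize (blk i)" if "k < N" "blk k = blk i" for k
    using that block_index_pos pos_less by metis+
  then show "bij_betw pos {k. k < N \<and> blk k = blk i} {..<bsize (blk i)}"
    by (intro bij_betw_byWitness[where f'="block_index (blk i)"]) (use block_index_valid[OF valid_block_blk[OF i]] in auto)
qed

text \<open>An \<open>At0\<close> block carries \<open>a\<close>, where \<open>f 0 = a \<otimes> 1\<^sub>q\<close>, and an \<open>At1\<close> block carries \<open>b\<close>,
  where \<open>f 1 = 1\<^sub>p \<otimes> b\<close>.\<close>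
definition block_entry :: "matfun \<Rightarrow> real \<Rightarrow> block \<Rightarrow> nat \<Rightarrow> nat \<Rightarrow> complex" where
  "block_entry f t r u v = (case r of Full _ _ \<Rightarrow> f t u v | At0 _ _ \<Rightarrow> f 0 (u * q) (v * q) | At1 _ _ \<Rightarrow> f 1 u v)"

lemma block_entry_mult:
  assumes f: "f \<in> dimdrop p q" and g: "g \<in> dimdrop p q" and "u < bsize r" and "v < bsize r"
  shows "block_entry (mf_mult (p * q) f g) t r u v = (\<Sum>w<bsize r. block_entry f t r u w * block_entry g t r w v)"
proof (cases r)
  case Full
  then show ?thesis by (simp add: block_entry_def bsize_def mf_mult_def)
next
  case At0
  then have "u < p" using assms(3) by (simp add: bsize_def)
  have "f 0 (u * q) k = 0" if "k < p * q" "k mod q \<noteq> 0" for k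
    using dimdrop_0_eq[OF f \<open>u < p\<close> _ q_pos, of "k div q" "k mod q"] that q_pos
    by (simp add: less_mult_imp_div_less)
  then have "(\<Sum>k<p * q. f 0 (u * q) k * g 0 k (v * q)) = (\<Sum>w<p. f 0 (u * q) (w * q) * g 0 (w * q) (v * q))"
    by (intro sum_multiples q_pos) simp
  then show ?thesis using At0 by (simp add: block_entry_def bsize_def mf_mult_def)
next
  case At1
  then have "u < q" using assms(3) by (simp add: bsize_def)
  have "f 1 u k = 0" if "k < p * q" "q \<le> k" for k
    using dimdrop_1_eq[OF f _ _ \<open>u < q\<close>, of 0 "k div q" "k mod q"] that p_pos q_pos
    by (simp add: less_mult_imp_div_less div_eq_0_iff)
  then have "(\<Sum>k<p * q. f 1 u k * g 1 k v) = (\<Sum>k<q. f 1 u k * g 1 k v)"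
    using p_pos by (intro sum.mono_neutral_right) auto
  then show ?thesis using At1 by (simp add: block_entry_def bsize_def mf_mult_def)
qed

text \<open>With \<open>f 0 = a \<otimes> 1\<^sub>q\<close> and \<open>f 1 = 1\<^sub>p \<otimes> b\<close>, \<open>stacked s f\<close> is the block diagonal matrix
  \<open>diag (a, \<dots>, a, b, \<dots>, b)\<close> whose copies of \<open>a\<close> fill \<open>[0, s)\<close>.\<close>
definition stacked :: "nat \<Rightarrow> matfun \<Rightarrow> nat \<Rightarrow> nat \<Rightarrow> complex" where
  "stacked s f z z' =
    (if z < s \<and> z' < s \<and> z div p = z' div p then f 0 (z mod p * q) (z' mod p * q)
     else if s \<le> z \<and> s \<le> z' \<and> (z - s) div q = (z' - s) div q then f 1 ((z - s) mod q) ((z' - s) mod q)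
     else 0)"

abbreviation pair_block_diag :: "matfun \<Rightarrow> real \<Rightarrow> nat \<times> nat \<Rightarrow> nat \<times> nat \<Rightarrow> complex"
  where "pair_block_diag f t \<equiv> block_diag (case_prod block_of) (case_prod offset_of) (block_entry f t)"

lemma pair_block_diag_0:
  assumes f: "f \<in> dimdrop p q"
  shows "pair_block_diag f 0 (x, y) (x', y') = stacked s0 f x x' * (if y = y' then 1 else 0)"
  using p_pos q_pos div_mod_eq_iff[of x x' p]
  by (cases "x < s0"; cases "x' < s0"; cases "full_at (x div p) y"; cases "full_at (x' div p) y'"; cases "y = y'")
    (auto simp: block_diag_def block_entry_def stacked_def block_of_def offset_of_def full_at_def
      mult_add_eq_iff dimdrop_0_eq[OF f] shifted_div_mod_eq_iff[of s1 y y' q] shifted_div_mod_eq_iff[of s0 x x' q])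

lemma s1_le_s0: "s1 \<le> s0"
  using k1_less_k0 by simp

text \<open>The involution \<open>\<sigma>\<close> of \<open>[0,P0) \<times> [0,P1)\<close>: it exchanges the two \<open>p\<close>-digits on \<open>[0,s0) \<times> [0,s1)\<close>
  and the two \<open>q\<close>-digits on \<open>[s0,P0) \<times> [s1,P1)\<close>, and it trades the swapped rectangles, which fill
  \<open>[0,s1) \<times> [s1, s1 + l0 q)\<close>, with \<open>[s0,P0) \<times> [0,s1)\<close> by transposition.\<close>
definition swap :: "nat \<Rightarrow> nat \<Rightarrow> nat \<times> nat" where
  "swap x y =
    (if x < s0 \<and> y < s1 then (x div p * p + y mod p, y div p * p + x mod p)
     else if s0 \<le> x \<and> s1 \<le> y then (s0 + (x - s0) div q * q + (y - s1) mod q, s1 + (y - s1) div q * q + (x - s0) mod q)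
     else if x < s0 \<and> swapped (x div p) ((y - s1) div q) then (s0 + (y - s1), x)
     else if s0 \<le> x \<and> y < s1 then (y, s1 + (x - s0))
     else (x, y))"

lemma swap_pp:
  assumes "x < s0" and "y < s1"
  shows "swap x y = (x div p * p + y mod p, y div p * p + x mod p)"
    and "x div p * p + y mod p < s0" and "y div p * p + x mod p < s1"
proof -
  show "swap x y = (x div p * p + y mod p, y div p * p + x mod p)"
    using assms by (simp add: swap_def)
  show "x div p * p + y mod p < s0" "y div p * p + x mod p < s1"
    using mult_add_less[of "x div p" k0 "y mod p" p] mult_add_less[of "y div p" k1 "x mod p" p] assms p_pos
    by (simp_all add: less_mult_imp_div_less)
qed

lemma swap_qq:
  assumes "s0 \<le> x" and "s1 \<le> y" and "x < P0" and "y < P1"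
  shows "swap x y = (s0 + (x - s0) div q * q + (y - s1) mod q, s1 + (y - s1) div q * q + (x - s0) mod q)"
    and "s0 + (x - s0) div q * q + (y - s1) mod q < P0" and "s1 + (y - s1) div q * q + (x - s0) mod q < P1"
proof -
  show "swap x y = (s0 + (x - s0) div q * q + (y - s1) mod q, s1 + (y - s1) div q * q + (x - s0) mod q)"
    using assms s1_le_s0 by (auto simp: swap_def)
  have "(x - s0) div q < l0" "(y - s1) div q < l1"
    using assms q_pos by (simp_all add: P0_eq P1_eq less_mult_imp_div_less)
  then show "s0 + (x - s0) div q * q + (y - s1) mod q < P0" "s1 + (y - s1) div q * q + (x - s0) mod q < P1"
    using mult_add_less[of "(x - s0) div q" l0 "(y - s1) mod q" q] mult_add_less[of "(y - s1) div q" l1 "(x - s0) mod q" q] q_pos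
    by (simp_all add: P0_eq P1_eq)
qed

lemma swap_pq_swapped:
  assumes "x < s0" and "s1 \<le> y" and "swapped (x div p) ((y - s1) div q)"
  shows "swap x y = (s0 + (y - s1), x)" and "s0 + (y - s1) < P0" and "x < s1"
proof -
  show "swap x y = (s0 + (y - s1), x)"
    using assms s1_le_s0 by (auto simp: swap_def)
  show "s0 + (y - s1) < P0" "x < s1"
    using assms p_pos q_pos mult_add_less[of "(y - s1) div q" l0 "(y - s1) mod q" q] mult_add_less[of "x div p" k1 "x mod p" p]
    by (simp_all add: swapped_def P0_eq)
qed

lemma swap_qp:
  assumes "s0 \<le> x" and "y < s1" and "x < P0"
  shows "swap x y = (y, s1 + (x - s0))" and "s1 + (x - s0) < P1" and "swapped (y div p) ((x - s0) div q)"
proof -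
  show "swap x y = (y, s1 + (x - s0))"
    using assms s1_le_s0 by (auto simp: swap_def)
  have "l0 * q < l1 * q" using l0_less_l1 q_pos by simp
  then show "s1 + (x - s0) < P1"
    using assms P0_eq P1_eq by linarith
  show "swapped (y div p) ((x - s0) div q)"
    using assms p_pos q_pos by (simp add: swapped_def P0_eq less_mult_imp_div_less)
qed

lemma swap_pq_full: "x < s0 \<Longrightarrow> s1 \<le> y \<Longrightarrow> \<not> swapped (x div p) ((y - s1) div q) \<Longrightarrow> swap x y = (x, y)"
  by (auto simp: swap_def)

lemma region_cases [case_names pp qq pq_swapped qp pq_full]:
  assumes "x < P0"
  obtains "x < s0" "y < s1"
    | "s0 \<le> x" "s1 \<le> y"
    | "x < s0" "s1 \<le> y" "swapped (x div p) ((y - s1) div q)" "x < s1"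
    | "s0 \<le> x" "y < s1" "swapped (y div p) ((x - s0) div q)"
    | "x < s0" "s1 \<le> y" "\<not> swapped (x div p) ((y - s1) div q)"
proof -
  have "x < s1" if "swapped (x div p) ((y - s1) div q)"
    using that p_pos by (simp add: swapped_def div_less_iff_less_mult)
  then show ?thesis
    using that swap_qp(3)[OF _ _ assms] by (metis not_le)
qed

lemma swap_involution:
  assumes "x < P0" and "y < P1"
  shows "fst (swap x y) < P0 \<and> snd (swap x y) < P1 \<and> swap (fst (swap x y)) (snd (swap x y)) = (x, y)"
  using assms(1)
proof (cases rule: region_cases[where x=x and y=y])
  case pp
  then show ?thesis
    using swap_pp[OF pp] swap_pp(1)[OF swap_pp(2,3)[OF pp]] assms s1_le_s0 p_pos by (simp add: P0_eq P1_eq)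
next
  case qq
  then show ?thesis
    using swap_qq[OF qq assms] swap_qq(1)[OF _ _ swap_qq(2,3)[OF qq assms]] q_pos by simp
next
  case pq_swapped
  then show ?thesis
    using swap_pq_swapped[OF pq_swapped(1-3)] swap_qp(1)[of "s0 + (y - s1)" x] assms by simp
next
  case qp
  have "y < s0" "y < P0" using qp(2) s1_le_s0 P0_eq by linarith+
  then show ?thesis
    using swap_qp[OF qp(1,2) assms(1)] swap_pq_swapped(1)[of y "s1 + (x - s0)"] qp assms by simp
next
  case pq_full
  then show ?thesis
    using swap_pq_full assms by simp
qed

lemma block_swap_pp:
  assumes "x < s0" and "y < s1"
  shows "case_prod block_of (swap x y) = At0 (x div p) (y div p * p + x mod p)"
    and "case_prod offset_of (swap x y) = y mod p"
  using swap_pp[OF assms] p_pos by (auto simp: block_of_def offset_of_def full_at_def)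

lemma block_swap_qq:
  assumes "s0 \<le> x" and "s1 \<le> y" and "x < P0" and "y < P1"
  shows "case_prod block_of (swap x y) = At1 ((x - s0) div q) (s1 + (y - s1) div q * q + (x - s0) mod q)"
    and "case_prod offset_of (swap x y) = (y - s1) mod q"
  using swap_qq[OF assms] q_pos by (auto simp: block_of_def offset_of_def)

lemma block_swap_pq_swapped:
  assumes "x < s0" and "s1 \<le> y" and "swapped (x div p) ((y - s1) div q)"
  shows "case_prod block_of (swap x y) = At1 ((y - s1) div q) x"
    and "case_prod offset_of (swap x y) = (y - s1) mod q"
  using swap_pq_swapped[OF assms] by (auto simp: block_of_def offset_of_def)

lemma block_swap_qp:
  assumes "s0 \<le> x" and "y < s1" and "x < P0"
  shows "case_prod block_of (swap x y) = At0 (y div p) (s1 + (x - s0))"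
    and "case_prod offset_of (swap x y) = y mod p"
proof -
  have "y < s0" using assms(2) s1_le_s0 by linarith
  then show "case_prod block_of (swap x y) = At0 (y div p) (s1 + (x - s0))"
    and "case_prod offset_of (swap x y) = y mod p"
    using swap_qp[OF assms] by (simp_all add: block_of_def offset_of_def full_at_def)
qed

lemma block_swap_pq_full:
  assumes "x < s0" and "s1 \<le> y" and "\<not> swapped (x div p) ((y - s1) div q)"
  shows "case_prod block_of (swap x y) = Full (x div p) ((y - s1) div q)"
    and "case_prod offset_of (swap x y) = x mod p * q + (y - s1) mod q"
  using swap_pq_full[OF assms] assms by (auto simp: block_of_def offset_of_def full_at_def)

lemmas block_swap = block_swap_pp block_swap_qq block_swap_pq_swapped block_swap_qp block_swap_pq_full

lemma pair_block_diag_swap_1: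
  assumes f: "f \<in> dimdrop p q" and "x < P0" "y < P1" "x' < P0" "y' < P1"
  shows "pair_block_diag f 1 (swap x y) (swap x' y') = (if x = x' then 1 else 0) * stacked s1 f y y'"
proof -
  note entries = block_diag_def block_entry_def stacked_def block_swap mult_add_eq_iff dimdrop_1_eq[OF f] swapped_def
  from assms(2,3) show ?thesis
  proof (cases rule: region_cases[where x=x and y=y])
    case pp
    from assms(4,5) show ?thesis
      using pp swap_pp(3)[OF pp] div_mod_eq_iff[of x x' p] assms(2-5) p_pos q_pos
      by (cases rule: region_cases[where x=x' and y=y']; cases "x = x'")
        (auto simp: entries)
  next
    case qq
    from assms(4,5) show ?thesis
      using qq assms(2-5) p_pos q_pos
      by (cases rule: region_cases[where x=x' and y=y']; cases "x = x'")
        (auto simp: entries shifted_div_mod_eq_iff[of s0 x x' q])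
  next
    case pq_swapped
    from assms(4,5) show ?thesis
      using pq_swapped assms(2-5) p_pos q_pos
      by (cases rule: region_cases[where x=x' and y=y']; cases "x = x'")
        (auto simp: entries)
  next
    case qp
    from assms(4,5) show ?thesis
      using qp swap_pp(3)[of x' y'] assms(2-5) p_pos q_pos
      by (cases rule: region_cases[where x=x' and y=y']; cases "x = x'")
        (auto simp: entries)
  next
    case pq_full
    from assms(4,5) show ?thesis
      using pq_full div_mod_eq_iff[of x x' p] assms(2-5) p_pos q_pos
      by (cases rule: region_cases[where x=x' and y=y']; cases "x = x'")
        (auto simp: entries)
  qed
qed

definition sigma :: "nat \<Rightarrow> nat" where
  "sigma i = (if i < N then fst (swap (i div P1) (i mod P1)) * P1 + snd (swap (i div P1) (i mod P1)) else i)"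

lemma sigma_pair:
  assumes "x < P0" and "y < P1"
  shows "sigma (x * P1 + y) = fst (swap x y) * P1 + snd (swap x y)"
    and "fst (swap x y) * P1 + snd (swap x y) < N"
  using swap_involution[OF assms] pair_index_less assms by (simp_all add: sigma_def)

lemma involution_sigma: "involution_on N sigma"
  unfolding involution_on_def
proof (intro allI impI)
  fix i assume "i < N"
  define x y where "x = i div P1" and "y = i mod P1"
  have xy: "x < P0" "y < P1" "i = x * P1 + y"
    using index_split[OF \<open>i < N\<close>] by (simp_all add: x_def y_def)
  note v = swap_involution[OF xy(1,2)]
  show "sigma i < N \<and> sigma (sigma i) = i"
    using sigma_pair[OF xy(1,2)] sigma_pair[of "fst (swap x y)" "snd (swap x y)"] v xy(3) by simp
qed

lemma block_diag_pair: "block_diag blk pos F i j = block_diag (case_prod block_of) (case_prod offset_of) F (i div P1, i mod P1) (j div P1, j mod P1)"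
  by (simp add: block_diag_def blk_def pos_def)

lemma block_diag_sigma:
  assumes "i < N" and "j < N"
  shows "block_diag blk pos F (sigma i) (sigma j)
    = block_diag (case_prod block_of) (case_prod offset_of) F (swap (i div P1) (i mod P1)) (swap (j div P1) (j mod P1))"
proof -
  have "sigma k div P1 = fst (swap (k div P1) (k mod P1))" "sigma k mod P1 = snd (swap (k div P1) (k mod P1))"
    if "k < N" for k
    using that index_split[OF that] swap_involution by (simp_all add: sigma_def)
  then show ?thesis using assms by (simp add: block_diag_pair)
qed

abbreviation block_form :: "matfun \<Rightarrow> real \<Rightarrow> nat \<Rightarrow> nat \<Rightarrow> complex"
  where "block_form f t \<equiv> block_diag blk pos (block_entry f t)"

definition embed :: "matfun \<Rightarrow> matfun" where
  "embed f = (\<lambda>t i j. if t \<in> {0..1} \<and> i < N \<and> j < N then rot_conj N sigma t (block_form f t) i j else 0)"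

lemma embed_in_dimdrop:
  assumes f: "f \<in> dimdrop p q"
  shows "embed f \<in> dimdrop P0 P1"
proof -
  have "continuous_on {0..1} (\<lambda>t. f t u v)" for u v
    using f by (simp add: dimdrop_def)
  then have "continuous_on {0..1} (\<lambda>t. block_entry f t r u v)" for r u v
    by (cases r) (simp_all add: block_entry_def)
  then have "continuous_on {0..1} (\<lambda>t. block_form f t i j)" for i j
    by (cases "blk i = blk j") (simp_all add: block_diag_def)
  then have "continuous_on {0..1} (\<lambda>t. embed f t i j)" for i j
  proof (cases "i < N \<and> j < N")
    case True
    have "continuous_on {0..1} (\<lambda>t. rot_conj N sigma t (block_form f t) i j)"
      by (rule continuous_on_rot_conj) fact
    then show ?thesis
      by (rule continuous_on_cong[THEN iffD1, rotated 2]) (simp_all add: embed_def True)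
  next
    case False
    then have "(\<lambda>t. embed f t i j) = (\<lambda>t. 0)" by (auto simp: embed_def)
    then show ?thesis by (metis continuous_on_const)
  qed
  moreover have "in_Mp_tensor_1q P0 P1 (embed f 0)"
    unfolding in_Mp_tensor_1q_def
  proof (intro exI allI impI)
    fix i j assume "i < P0 * P1" "j < P0 * P1"
    then show "embed f 0 i j = stacked s0 f (i div P1) (j div P1) * (if i mod P1 = j mod P1 then 1 else 0)"
      by (simp add: embed_def rot_conj_0 block_diag_pair pair_block_diag_0[OF f])
  qed
  moreover have "in_1p_tensor_Mq P0 P1 (embed f 1)"
    unfolding in_1p_tensor_Mq_def
  proof (intro exI allI impI)
    fix i j assume ij: "i < P0 * P1" "j < P0 * P1"
    then show "embed f 1 i j = (if i div P1 = j div P1 then 1 else 0) * stacked s1 f (i mod P1) (j mod P1)"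
      using index_split[OF ij(1)] index_split[OF ij(2)]
      by (simp add: embed_def rot_conj_1[OF involution_sigma] block_diag_sigma pair_block_diag_swap_1[OF f])
  qed
  ultimately show ?thesis
    by (auto simp: dimdrop_def embed_def)
qed

lemma embed_add: "embed (mf_add f g) = mf_add (embed f) (embed g)"
proof -
  have "block_form (mf_add f g) t = (\<lambda>i j. block_form f t i j + block_form g t i j)" for t
    by (auto intro!: ext simp: block_diag_def block_entry_def mf_add_def split: block.split)
  then show ?thesis by (auto intro!: ext simp: embed_def mf_add_def rot_conj_add)
qed

lemma embed_scale: "embed (mf_scale c f) = mf_scale c (embed f)"
proof -
  have "block_form (mf_scale c f) t = (\<lambda>i j. c * block_form f t i j)" for t
    by (auto intro!: ext simp: block_diag_def block_entry_def mf_scale_def split: block.split)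
  then show ?thesis by (auto intro!: ext simp: embed_def mf_scale_def rot_conj_scale)
qed

lemma embed_star: "embed (mf_star f) = mf_star (embed f)"
proof -
  have "block_form (mf_star f) t = adj (block_form f t)" for t
    by (auto intro!: ext simp: block_diag_def block_entry_def mf_star_def adj_def split: block.split)
  then have "rot_conj N sigma t (block_form (mf_star f) t) i j
      = cnj (rot_conj N sigma t (block_form f t) j i)" for t i j
    by (simp add: rot_conj_adj) (simp add: adj_def)
  then show ?thesis by (auto intro!: ext simp: embed_def mf_star_def)
qed

lemma embed_unit: "embed (mf_unit (p * q)) = mf_unit N"
proof -
  have entry: "block_entry (mf_unit (p * q)) t r u v = (if u = v then 1 else 0)"
    if "t \<in> {0..1}" and "u < bsize r" and "v < bsize r" for t r u v
  proof (cases r)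
    case Full
    then show ?thesis using that by (simp add: block_entry_def bsize_def mf_unit_def)
  next
    case At0
    then have "u * q < p * q" "v * q < p * q" using that q_pos by (simp_all add: bsize_def)
    then show ?thesis using At0 q_pos by (simp add: block_entry_def mf_unit_def)
  next
    case At1
    then have "u < p * q" "v < p * q"
      using that p_pos less_le_trans[of _ q "p * q"] by (simp_all add: bsize_def)
    then show ?thesis using At1 by (simp add: block_entry_def mf_unit_def)
  qed
  have "embed (mf_unit (p * q)) t i j = mf_unit N t i j" for t i j
  proof (cases "t \<in> {0..1} \<and> i < N \<and> j < N")
    case True
    then show ?thesis
      using rot_conj_id[OF involution_sigma, of i j] block_diag_id[OF entry] by (simp add: embed_def mf_unit_def)
  qed (auto simp: embed_def mf_unit_def)
  then show ?thesis by (intro ext)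
qed

lemma embed_mult:
  assumes "f \<in> dimdrop p q" and "g \<in> dimdrop p q"
  shows "embed (mf_mult (p * q) f g) = mf_mult N (embed f) (embed g)"
proof (intro ext)
  fix t i j
  show "embed (mf_mult (p * q) f g) t i j = mf_mult N (embed f) (embed g) t i j"
  proof (cases "t \<in> {0..1} \<and> i < N \<and> j < N")
    case True
    have "embed (mf_mult (p * q) f g) t i j = rot_conj N sigma t (block_form (mf_mult (p * q) f g) t) i j"
      using True by (simp add: embed_def)
    also have "\<dots> = rot_conj N sigma t (mat_mult N (block_form f t) (block_form g t)) i j"
      using True by (intro rot_conj_cong block_diag_mult block_entry_mult[OF assms]) auto
    also have "\<dots> = mat_mult N (rot_conj N sigma t (block_form f t)) (rot_conj N sigma t (block_form g t)) i j"
      by (simp add: rot_conj_mult[OF involution_sigma])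
    also have "\<dots> = mf_mult N (embed f) (embed g) t i j"
      using True unfolding mat_mult_def mf_mult_def embed_def by (intro sum.cong) auto
    finally show ?thesis .
  qed (auto simp: embed_def mf_mult_def)
qed

lemma block_diag_from_embed:
  assumes "t \<in> {0..1}" and "i < N" and "j < N"
  shows "block_form f t i j = mat_mult N (mat_mult N (adj (rot sigma t)) (embed f t)) (rot sigma t) i j"
proof -
  have "mat_mult N (mat_mult N (adj (rot sigma t)) (embed f t)) (rot sigma t) i j
      = mat_mult N (mat_mult N (adj (rot sigma t)) (rot_conj N sigma t (block_form f t))) (rot sigma t) i j"
    using assms by (intro mat_mult_cong refl) (auto simp: embed_def)
  also have "\<dots> = block_form f t i j"
    by (rule rot_conj_inverse[OF involution_sigma assms(2,3)])
  finally show ?thesis ..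
qed

text \<open>The block \<open>Full (k0 - 1) 0\<close>, which exists because \<open>k1 < k0\<close>, carries \<open>f t\<close> itself.\<close>
lemma inj_on_embed: "inj_on embed (dimdrop p q)"
proof (rule inj_onI)
  fix f g assume f: "f \<in> dimdrop p q" and g: "g \<in> dimdrop p q" and eq: "embed f = embed g"
  define r where "r = Full (k0 - 1) 0"
  have r: "valid_block r" "bsize r = p * q"
    using k1_less_k0 l0_less_l1 by (auto simp: r_def valid_block_def swapped_def bsize_def)
  have "f t u v = g t u v" if "t \<in> {0..1}" "u < p * q" "v < p * q" for t u v
  proof -
    have idx: "block_index r u < N" "blk (block_index r u) = r" "pos (block_index r u) = u"
      "block_index r v < N" "blk (block_index r v) = r" "pos (block_index r v) = v"
      using block_index_valid[OF r(1)] r(2) that(2,3) by auto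
    have "f t u v = block_form f t (block_index r u) (block_index r v)"
      using idx by (simp add: block_diag_def block_entry_def r_def)
    also have "\<dots> = block_form g t (block_index r u) (block_index r v)"
      using idx that(1) by (simp add: block_diag_from_embed eq)
    also have "\<dots> = g t u v"
      using idx by (simp add: block_diag_def block_entry_def r_def)
    finally show ?thesis .
  qed
  moreover have "f t u v = 0" "g t u v = 0" if "\<not> (t \<in> {0..1} \<and> u < p * q \<and> v < p * q)" for t u v
    using f g that unfolding dimdrop_def by auto
  ultimately show "f = g"
    by (intro ext) metis
qed

lemma unital_inj_star_hom_embed: "unital_inj_star_hom p q P0 P1 embed"
  unfolding unital_inj_star_hom_def
  using embed_in_dimdrop embed_add embed_scale embed_mult embed_star embed_unit inj_on_embed by auto

end

theorem lemma4p2: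
  fixes p q P0 P1 :: nat
  assumes "0 < p" and "0 < q" and "coprime p q"
    and "0 < P0" and "0 < P1" and "coprime P0 P1"
    and "min P0 P1 \<ge> 2 * p * q"
  shows "\<exists>\<phi>. unital_inj_star_hom p q P0 P1 \<phi>"
proof -
  \<comment> \<open>The construction does not need \<open>P0\<close> and \<open>P1\<close> to be coprime.\<close>
  have "2 * p * q \<le> P1" and "2 * q * p \<le> P0" and "coprime q p"
    using assms(3,7) by (simp_all add: mult.commute mult.left_commute coprime_commute)
  obtain k1 l1 where P1: "P1 = k1 * p + l1 * q" "k1 < q" "p < l1"
    using coprime_sum_decomposition[OF assms(1-3) \<open>2 * p * q \<le> P1\<close>] by blast
  obtain l0 k0 where P0: "P0 = l0 * q + k0 * p" "l0 < p" "q < k0"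
    using coprime_sum_decomposition[OF assms(2,1) \<open>coprime q p\<close> \<open>2 * q * p \<le> P0\<close>]
    by blast
  interpret dimdrop_split p q P0 P1 k0 l0 k1 l1
    using assms P0 P1 by unfold_locales auto
  show ?thesis
    using unital_inj_star_hom_embed by blast
qed

end
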